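(* Let $\mathfrak{g}$ be a Lie algebra with structure constants $c^\alpha_{\beta\gamma}$ in a basis $\{e_\alpha\}$. Suppose that an $\mathrm{End}(\mathfrak{g})$-valued vector field $\xi^\alpha_\beta{}^j$ on Minkowski space satisfies \[\partial^{(i}\xi^{|\alpha|}_\beta{}^{j)}=\eta^{ij}k^\alpha_\beta,\qquad \xi^\alpha_\beta{}^jc^\beta_{\gamma\delta}+c^\alpha_{\beta\gamma}\xi^\beta_\delta{}^j=0\] for some functions $k^\alpha_\beta$. Then $Q^\alpha_i=\xi^\alpha_\beta{}^jF^\beta_{ij}$ are the components of a first order generalized symmetry of the Yang-Mills equations.
   Context: Minkowski space has coordinates $x^i$, $i=0,\dots,3$, metric $\eta=\mathrm{diag}(-1,1,1,1)$ (used to raise/lower indices); round brackets denote symmetrization, with $|\alpha|$ excluded. $[e_\beta,e_\gamma]=c^\alpha_{\beta\gamma}e_\alpha$. Jet coordinates $x^i,a^\alpha_i,a^\alpha_{i,j_1},\dots$ for $\mathfrak{g}$-valued potentials $a^\alpha_i$; differential functions are smooth functions of finitely many jet coordinates; $D_i$ is the total derivative; $\nabla_iG^\alpha=D_iG^\alpha+c^\alpha_{\beta\gamma}a^\beta_iG^\gamma$; $[G,H]^\alpha=c^\alpha_{\beta\gamma}G^\beta H^\gamma$. Field tensor $F^\alpha_{ij}=a^\alpha_{j,i}-a^\alpha_{i,j}+c^\alpha_{\beta\gamma}a^\beta_ia^\gamma_j$; Yang-Mills equations $\nabla^jF_{ij}=0$, with $p$-fold prolonged solution manifold $\mathcal R^p$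 defined by $\nabla_{i_1}\cdots\nabla_{i_r}\nabla^jF_{i_{r+1}j}=0$, $0\le r\le p$. A generalized symmetry of order $p$ is a collection of $\mathfrak{g}$-valued differential functions $Q^\alpha_i$ of order $p$ with $\nabla^j\nabla_iQ_j-\nabla^j\nabla_jQ_i-[F_i{}^j,Q_j]=0$ on $\mathcal R^p$. *)

theory Defs
  imports "HOL-Analysis.Analysis" "HOL-Library.Multiset"
begin

text \<open>Jet variables: X i = x^i ; A a i J = a^a_{i,J} with J a multiset of
  derivative indices (symmetric in the derivative indices).\<close>

datatype 'g jvar = X 4 | A 'g 4 "4 multiset"

type_synonym 'g jpt = "'g jvar \<Rightarrow> real"
type_synonym 'g dfun = "'g jpt \<Rightarrow> real"

text \<open>Minkowski metric diag(-1,1,1,1) (its own inverse).\<close>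
definition eta :: "4 \<Rightarrow> 4 \<Rightarrow> real" where
  "eta i j = (if i = j then (if i = 0 then -1 else 1) else 0)"

text \<open>c a b d = c^a_{bd}: structure constants of a real Lie algebra.\<close>
definition lie_structure :: "('g::finite \<Rightarrow> 'g \<Rightarrow> 'g \<Rightarrow> real) \<Rightarrow> bool" where
  "lie_structure c \<longleftrightarrow> (\<forall>a b d. c a b d = - c a d b) \<and>
     (\<forall>a b d e. (\<Sum>f\<in>UNIV. c a b f * c f d e + c a d f * c f e b + c a e f * c f b d) = 0)"

fun vord :: "'g jvar \<Rightarrow> nat" where
  "vord (X _) = 0"
| "vord (A _ _ J) = size J"

definition pdv :: "'g jvar \<Rightarrow> 'g dfun \<Rightarrow> 'g dfun" where
  "pdv v f p = deriv (\<lambda>t. f (p(v := t))) (p v)"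

fun iterpd :: "'g jvar list \<Rightarrow> 'g dfun \<Rightarrow> 'g dfun" where
  "iterpd [] f = f"
| "iterpd (v # ws) f = pdv v (iterpd ws f)"

definition smooth_jet :: "'g dfun \<Rightarrow> bool" where
  "smooth_jet f \<longleftrightarrow> (\<forall>ws. continuous_on UNIV (iterpd ws f) \<and>
      (\<forall>v p. (\<lambda>t. iterpd ws f (p(v := t))) differentiable (at (p v))))"

definition diff_fun :: "nat \<Rightarrow> 'g dfun \<Rightarrow> bool" where
  "diff_fun n f \<longleftrightarrow>
     (\<exists>S. finite S \<and> (\<forall>v\<in>S. vord v \<le> n) \<and> (\<forall>p q. (\<forall>v\<in>S. p v = q v) \<longrightarrow> f p = f q))
     \<and> smooth_jet f"

fun is_avar :: "'g jvar \<Rightarrow> bool" where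
  "is_avar (X _) = False"
| "is_avar (A _ _ _) = True"

fun shiftv :: "4 \<Rightarrow> 'g jvar \<Rightarrow> 'g jvar" where
  "shiftv i (X k) = X k"
| "shiftv i (A a k J) = A a k (J + {#i#})"

text \<open>Total derivative D_i = d/dx^i + sum a^a_{k,Ji} d/da^a_{k,J}
  (only finitely many nonzero terms for a differential function).\<close>
definition totD :: "4 \<Rightarrow> 'g dfun \<Rightarrow> 'g dfun" where
  "totD i f p = pdv (X i) f p +
     (\<Sum>v\<in>{v. is_avar v \<and> pdv v f p \<noteq> 0}. p (shiftv i v) * pdv v f p)"

definition Fld :: "('g::finite \<Rightarrow> 'g \<Rightarrow> 'g \<Rightarrow> real) \<Rightarrow> 'g \<Rightarrow> 4 \<Rightarrow> 4 \<Rightarrow> 'g dfun" where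
  "Fld c a i j p = p (A a j {#i#}) - p (A a i {#j#})
     + (\<Sum>b\<in>UNIV. \<Sum>d\<in>UNIV. c a b d * p (A b i {#}) * p (A d j {#}))"

definition cov :: "('g::finite \<Rightarrow> 'g \<Rightarrow> 'g \<Rightarrow> real) \<Rightarrow> 4 \<Rightarrow> ('g \<Rightarrow> 'g dfun) \<Rightarrow> ('g \<Rightarrow> 'g dfun)" where
  "cov c i G a p = totD i (G a) p + (\<Sum>b\<in>UNIV. \<Sum>d\<in>UNIV. c a b d * p (A b i {#}) * G d p)"

fun covs :: "('g::finite \<Rightarrow> 'g \<Rightarrow> 'g \<Rightarrow> real) \<Rightarrow> 4 list \<Rightarrow> ('g \<Rightarrow> 'g dfun) \<Rightarrow> ('g \<Rightarrow> 'g dfun)" where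
  "covs c [] G = G"
| "covs c (i # is) G = cov c i (covs c is G)"

definition YM :: "('g::finite \<Rightarrow> 'g \<Rightarrow> 'g \<Rightarrow> real) \<Rightarrow> 4 \<Rightarrow> 'g \<Rightarrow> 'g dfun" where
  "YM c i a p = (\<Sum>j\<in>UNIV. eta j j * cov c j (\<lambda>b. Fld c b i j) a p)"

definition onR :: "('g::finite \<Rightarrow> 'g \<Rightarrow> 'g \<Rightarrow> real) \<Rightarrow> nat \<Rightarrow> 'g jpt \<Rightarrow> bool" where
  "onR c n p \<longleftrightarrow> (\<forall>is i a. length is \<le> n \<longrightarrow> covs c is (YM c i) a p = 0)"

text \<open>Generalized symmetry of order n: Q i a = Q^a_i.\<close>
definition gen_symmetry :: "('g::finite \<Rightarrow> 'g \<Rightarrow> 'g \<Rightarrow> real) \<Rightarrow> nat \<Rightarrow> (4 \<Rightarrow> 'g \<Rightarrow> 'g dfun) \<Rightarrow> bool" where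
  "gen_symmetry c n Q \<longleftrightarrow> (\<forall>i a. diff_fun n (Q i a)) \<and>
     (\<forall>p. onR c n p \<longrightarrow> (\<forall>i a.
        (\<Sum>j\<in>UNIV. eta j j * (cov c j (cov c i (Q j)) a p - cov c j (cov c j (Q i)) a p))
        - (\<Sum>j\<in>UNIV. \<Sum>b\<in>UNIV. \<Sum>d\<in>UNIV. c a b d * (eta j j * Fld c b i j p) * Q j d p) = 0))"

definition pdx :: "4 \<Rightarrow> (real^4 \<Rightarrow> real) \<Rightarrow> real^4 \<Rightarrow> real" where
  "pdx i g x = deriv (\<lambda>t. g (x + t *\<^sub>R axis i 1)) 0"

fun ipdx :: "4 list \<Rightarrow> (real^4 \<Rightarrow> real) \<Rightarrow> real^4 \<Rightarrow> real" where
  "ipdx [] g = g"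
| "ipdx (i # is) g = pdx i (ipdx is g)"

definition smooth4 :: "(real^4 \<Rightarrow> real) \<Rightarrow> bool" where
  "smooth4 g \<longleftrightarrow> (\<forall>is x. ipdx is g differentiable (at x))"

end

theory Submission
  imports Defs
begin

(* Write Q_i = sum_l xi_l F_il, where xi_l is the matrix (xi^a_b^l)_{a,b}. The second hypothesis
   says that each xi_l commutes with ad, so it passes through every bracket and
   nabla_k (xi_l G) = (d_k xi_l) G + xi_l nabla_k G. Expanding the linearized Yang-Mills operator
   on Q therefore leaves three groups of terms, according to the number of derivatives of xi.
   The terms without derivatives vanish on solutions by the Bianchi identity, the Ricci identity
   and the once-prolonged field equations. The terms with one derivative vanish because, by the
   conformal Killing equation, d^j xi^l is antisymmetric up to a multiple of eta^jl; with the
   Bianchi identity and the field equations again, their contraction against nabla F is zero.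
   The second derivatives of a conformal Killing field are determined by the gradient of k, and
   their contraction against the antisymmetric F vanishes identically.
   Total derivatives are computed in the algebra of polynomials in the jet coordinates with
   smooth coefficients in x, where they obey the Leibniz rule and commute. *)

section \<open>Directional derivatives on Minkowski space\<close>

lemma has_real_derivative_along_axis:
  fixes z :: "real^'n"
  assumes "(g has_derivative g') (at (z + s0 *\<^sub>R axis i 1))"
  shows "((\<lambda>s. g (z + s *\<^sub>R axis i 1)) has_real_derivative g' (axis i 1)) (at s0)"
proof -
  have "((\<lambda>s. z + s *\<^sub>R axis i (1::real)) has_derivative (\<lambda>h. h *\<^sub>R axis i 1)) (at s0)"
    by (auto intro!: derivative_eq_intros)
  from diff_chain_at[OF this assms]
  have "((\<lambda>s. g (z + s *\<^sub>R axis i 1)) has_derivative (\<lambda>h. g' (h *\<^sub>R axis i 1))) (at s0)"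
    by (simp add: o_def)
  moreover have "(\<lambda>h. g' (h *\<^sub>R axis i 1)) = (*) (g' (axis i 1))"
    using has_derivative_linear[OF assms] by (auto simp: linear_scale)
  ultimately show ?thesis by (simp add: has_field_derivative_def)
qed

lemma has_real_derivative_pdx:
  assumes "g differentiable at (z + s0 *\<^sub>R axis i 1)"
  shows "((\<lambda>s. g (z + s *\<^sub>R axis i 1)) has_real_derivative pdx i g (z + s0 *\<^sub>R axis i 1)) (at s0)"
proof -
  let ?y = "z + s0 *\<^sub>R axis i 1"
  obtain g' where g': "(g has_derivative g') (at ?y)"
    using assms by (auto simp: differentiable_def)
  have "((\<lambda>s. g (?y + s *\<^sub>R axis i 1)) has_real_derivative g' (axis i 1)) (at 0)"
    using has_real_derivative_along_axis[of g g' ?y 0] g' by simp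
  then have "pdx i g ?y = g' (axis i 1)"
    unfolding pdx_def by (rule DERIV_imp_deriv)
  then show ?thesis
    using has_real_derivative_along_axis[OF g'] by simp
qed

lemma has_real_derivative_pdx_at_0:
  "g differentiable at y \<Longrightarrow> ((\<lambda>s. g (y + s *\<^sub>R axis i 1)) has_real_derivative pdx i g y) (at 0)"
  using has_real_derivative_pdx[of g y 0 i] by simp

lemma smooth4_pdx:
  assumes "smooth4 g"
  shows "smooth4 (pdx i g)"
proof -
  have "ipdx (is @ [i]) g = ipdx is (pdx i g)" for "is"
    by (induction "is") auto
  then show ?thesis
    using assms unfolding smooth4_def by metis
qed

lemma smooth4_differentiable: "smooth4 g \<Longrightarrow> g differentiable at x"
  unfolding smooth4_def by (metis ipdx.simps(1))

lemma smooth4_continuous_on: "smooth4 g \<Longrightarrow> continuous_on UNIV g"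
  by (meson continuous_at_imp_continuous_on differentiable_imp_continuous_within smooth4_differentiable)

lemma pdx_eqI: "((\<lambda>s. g (y + s *\<^sub>R axis i 1)) has_real_derivative D) (at 0) \<Longrightarrow> pdx i g y = D"
  unfolding pdx_def by (rule DERIV_imp_deriv)

lemma pdx_add:
  "f differentiable at y \<Longrightarrow> g differentiable at y \<Longrightarrow> pdx i (\<lambda>x. f x + g x) y = pdx i f y + pdx i g y"
  by (intro pdx_eqI DERIV_add has_real_derivative_pdx_at_0)

lemma pdx_cmult: "f differentiable at y \<Longrightarrow> pdx i (\<lambda>x. r * f x) y = r * pdx i f y"
  by (intro pdx_eqI DERIV_cmult has_real_derivative_pdx_at_0)

lemma pdx_sum:
  "(\<And>s. s \<in> T \<Longrightarrow> f s differentiable at y) \<Longrightarrow> pdx i (\<lambda>x. \<Sum>s\<in>T. f s x) y = (\<Sum>s\<in>T. pdx i (f s) y)"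
  by (intro pdx_eqI DERIV_sum has_real_derivative_pdx_at_0)

lemma pdx_const: "pdx i (\<lambda>x. r) y = 0"
  by (simp add: pdx_def)

lemma second_difference_mvt:
  assumes g: "smooth4 g" and h: "h > 0"
  obtains y where "dist y x \<le> 2 * h"
    "g (x + h *\<^sub>R axis i 1 + h *\<^sub>R axis j 1) - g (x + h *\<^sub>R axis i 1) - g (x + h *\<^sub>R axis j 1) + g x
     = h * h * pdx j (pdx i g) y"
proof -
  let ?ei = "axis i (1::real)" and ?ej = "axis j (1::real)"
  have gd: "g differentiable at y" "pdx i g differentiable at y" for y
    using g smooth4_pdx smooth4_differentiable by blast+
  define u where "u s = g (x + h *\<^sub>R ?ej + s *\<^sub>R ?ei) - g (x + s *\<^sub>R ?ei)" for s
  have u': "(u has_real_derivative (pdx i g (x + h *\<^sub>R ?ej + s *\<^sub>R ?ei) - pdx i g (x + s *\<^sub>R ?ei))) (at s)" for s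
    unfolding u_def[abs_def] by (intro DERIV_diff has_real_derivative_pdx gd)
  obtain s where s: "0 < s" "s < h"
    and us: "u h - u 0 = h * (pdx i g (x + h *\<^sub>R ?ej + s *\<^sub>R ?ei) - pdx i g (x + s *\<^sub>R ?ei))"
    using MVT2[OF h u'] by auto
  define v where "v t = pdx i g (x + s *\<^sub>R ?ei + t *\<^sub>R ?ej)" for t
  have v': "(v has_real_derivative pdx j (pdx i g) (x + s *\<^sub>R ?ei + t *\<^sub>R ?ej)) (at t)" for t
    unfolding v_def[abs_def] by (intro has_real_derivative_pdx gd)
  obtain t where t: "0 < t" "t < h"
    and vt: "v h - v 0 = h * pdx j (pdx i g) (x + s *\<^sub>R ?ei + t *\<^sub>R ?ej)"
    using MVT2[OF h v'] by auto
  have v_diff: "v h - v 0 = pdx i g (x + h *\<^sub>R ?ej + s *\<^sub>R ?ei) - pdx i g (x + s *\<^sub>R ?ei)"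
    unfolding v_def by (simp add: algebra_simps)
  have "dist (x + s *\<^sub>R ?ei + t *\<^sub>R ?ej) x \<le> norm (s *\<^sub>R ?ei) + norm (t *\<^sub>R ?ej)"
    unfolding dist_norm by (metis add_diff_cancel_left' add.assoc norm_triangle_ineq)
  then have "dist (x + s *\<^sub>R ?ei + t *\<^sub>R ?ej) x \<le> 2 * h"
    using s t by simp
  moreover have "u h - u 0 = g (x + h *\<^sub>R ?ei + h *\<^sub>R ?ej) - g (x + h *\<^sub>R ?ei) - g (x + h *\<^sub>R ?ej) + g x"
    unfolding u_def by (simp add: algebra_simps)
  ultimately show ?thesis
    using that us vt v_diff by auto
qed

text \<open>Schwarz's theorem: by the mean value theorem applied twice, in either order, both mixed
  partials are limits of the same second difference quotient.\<close>

lemma pdx_commute: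
  assumes g: "smooth4 g"
  shows "pdx j (pdx i g) x = pdx i (pdx j g) x"
proof (rule ccontr)
  let ?u = "pdx j (pdx i g)" and ?v = "pdx i (pdx j g)"
  assume ne: "?u x \<noteq> ?v x"
  define e where "e = \<bar>?u x - ?v x\<bar> / 2"
  have e: "e > 0" using ne by (simp add: e_def)
  have "continuous (at x) ?u" "continuous (at x) ?v"
    using g smooth4_pdx smooth4_differentiable differentiable_imp_continuous_within by blast+
  then obtain du dv where d: "du > 0" "dv > 0"
    and du: "\<And>y. dist y x < du \<Longrightarrow> dist (?u y) (?u x) < e"
    and dv: "\<And>y. dist y x < dv \<Longrightarrow> dist (?v y) (?v x) < e"
    using e unfolding continuous_at_eps_delta by metis
  define h where "h = min du dv / 4"
  have h: "h > 0" using d by (simp add: h_def)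
  obtain y1 where y1: "dist y1 x \<le> 2 * h"
    "g (x + h *\<^sub>R axis i 1 + h *\<^sub>R axis j 1) - g (x + h *\<^sub>R axis i 1) - g (x + h *\<^sub>R axis j 1) + g x
     = h * h * ?u y1"
    using second_difference_mvt[OF g h] .
  obtain y2 where y2: "dist y2 x \<le> 2 * h"
    "g (x + h *\<^sub>R axis j 1 + h *\<^sub>R axis i 1) - g (x + h *\<^sub>R axis j 1) - g (x + h *\<^sub>R axis i 1) + g x
     = h * h * ?v y2"
    using second_difference_mvt[OF g h] .
  have "?u y1 = ?v y2"
    using y1(2) y2(2) h by (simp add: algebra_simps)
  moreover have "dist (?u y1) (?u x) < e" "dist (?v y2) (?v x) < e"
    using du dv y1(1) y2(1) h_def d by simp_all
  ultimately show False
    unfolding e_def dist_real_def by (auto simp: abs_if split: if_split_asm)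
qed

section \<open>Differential functions and total derivatives\<close>

abbreviation base_pt :: "'g jpt \<Rightarrow> real^4" where
  "base_pt p \<equiv> (\<chi> l. p (X l))"

inductive_set jpoly :: "'g dfun set" where
  jpoly_const: "(\<lambda>p. r) \<in> jpoly"
| jpoly_var: "(\<lambda>p. p v) \<in> jpoly"
| jpoly_smooth: "smooth4 g \<Longrightarrow> (\<lambda>p. g (base_pt p)) \<in> jpoly"
| jpoly_add: "f \<in> jpoly \<Longrightarrow> h \<in> jpoly \<Longrightarrow> (\<lambda>p. f p + h p) \<in> jpoly"
| jpoly_mult: "f \<in> jpoly \<Longrightarrow> h \<in> jpoly \<Longrightarrow> (\<lambda>p. f p * h p) \<in> jpoly"

lemma jpoly_sum: "(\<And>s. s \<in> T \<Longrightarrow> f s \<in> jpoly) \<Longrightarrow> (\<lambda>p. \<Sum>s\<in>T. f s p) \<in> jpoly"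
proof (induction T rule: infinite_finite_induct)
  case (infinite T)
  then show ?case using jpoly_const[of 0] by simp
next
  case empty
  then show ?case using jpoly_const[of 0] by simp
next
  case (insert x F)
  then show ?case using jpoly_add[of "f x" "\<lambda>p. \<Sum>s\<in>F. f s p"] by simp
qed

lemma jpoly_cmult: "f \<in> jpoly \<Longrightarrow> (\<lambda>p. r * f p) \<in> jpoly"
  using jpoly_mult[OF jpoly_const] by blast

lemma jpoly_diff: "f \<in> jpoly \<Longrightarrow> h \<in> jpoly \<Longrightarrow> (\<lambda>p. f p - h p) \<in> jpoly"
  using jpoly_add[OF _ jpoly_cmult[of h "-1"]] by simp

lemma base_pt_upd_X: "base_pt (p(X i := t)) = (base_pt p - p (X i) *\<^sub>R axis i 1) + t *\<^sub>R axis i 1"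
  by (auto simp: vec_eq_iff axis_def)

lemma base_pt_upd_avar: "is_avar v \<Longrightarrow> base_pt (p(v := t)) = base_pt p"
  by (cases v) (auto simp: vec_eq_iff)

lemma pdv_eqI: "((\<lambda>t. f (p(v := t))) has_real_derivative D) (at (p v)) \<Longrightarrow> pdv v f p = D"
  unfolding pdv_def by (rule DERIV_imp_deriv)

lemma has_real_derivative_pdv:
  "((\<lambda>t. f (p(v := t))) has_real_derivative D) (at (p v)) \<Longrightarrow>
   ((\<lambda>t. f (p(v := t))) has_real_derivative pdv v f p) (at (p v))"
  by (simp add: pdv_eqI)

lemma has_real_derivative_smooth_base_pt:
  assumes "smooth4 g"
  shows "((\<lambda>t. g (base_pt (p(v := t)))) has_real_derivative
           (case v of X i \<Rightarrow> pdx i g (base_pt p) | A _ _ _ \<Rightarrow> 0)) (at (p v))"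
proof (cases v)
  case (X i)
  have "((\<lambda>t. g ((base_pt p - p (X i) *\<^sub>R axis i 1) + t *\<^sub>R axis i 1)) has_real_derivative
          pdx i g ((base_pt p - p (X i) *\<^sub>R axis i 1) + p (X i) *\<^sub>R axis i 1)) (at (p (X i)))"
    using assms by (intro has_real_derivative_pdx smooth4_differentiable)
  then show ?thesis
    using X by (simp only: base_pt_upd_X jvar.case fun_upd_same) simp
qed (simp add: base_pt_upd_avar)

lemma jpoly_has_real_derivative:
  "f \<in> jpoly \<Longrightarrow> ((\<lambda>t. f (p(v := t))) has_real_derivative pdv v f p) (at (p v))"
proof (induction arbitrary: p rule: jpoly.induct)
  case (jpoly_var w)
  have "((\<lambda>t. (p(v := t)) w) has_real_derivative (if v = w then 1 else 0)) (at (p v))"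
    by (cases "v = w") auto
  then show ?case by (rule has_real_derivative_pdv)
next
  case (jpoly_smooth g)
  show ?case using has_real_derivative_smooth_base_pt[OF jpoly_smooth] by (rule has_real_derivative_pdv)
next
  case (jpoly_add f h)
  from DERIV_add[OF jpoly_add.IH] show ?case by (rule has_real_derivative_pdv)
next
  case (jpoly_mult f h)
  from DERIV_mult[OF jpoly_mult.IH] show ?case by (rule has_real_derivative_pdv)
qed (rule has_real_derivative_pdv[OF DERIV_const])

lemma pdv_const: "pdv v (\<lambda>p. r) p = 0"
  by (rule pdv_eqI) simp

lemma pdv_var: "pdv v (\<lambda>q. q w) p = (if v = w then 1 else 0)"
  by (rule pdv_eqI) auto

lemma pdv_add: "f \<in> jpoly \<Longrightarrow> h \<in> jpoly \<Longrightarrow> pdv v (\<lambda>p. f p + h p) p = pdv v f p + pdv v h p"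
  by (intro pdv_eqI DERIV_add jpoly_has_real_derivative)

lemma pdv_mult:
  assumes "f \<in> jpoly" "h \<in> jpoly"
  shows "pdv v (\<lambda>p. f p * h p) p = pdv v f p * h p + f p * pdv v h p"
  using DERIV_mult[OF jpoly_has_real_derivative[OF assms(1), of p v] jpoly_has_real_derivative[OF assms(2), of p v]]
  by (intro pdv_eqI) (simp add: mult.commute)

lemma pdv_smooth_X: "smooth4 g \<Longrightarrow> pdv (X i) (\<lambda>p. g (base_pt p)) p = pdx i g (base_pt p)"
  using has_real_derivative_smooth_base_pt[of g p "X i"] by (intro pdv_eqI) simp

lemma pdv_smooth_avar: "is_avar v \<Longrightarrow> pdv v (\<lambda>p. g (base_pt p)) p = 0"
  by (rule pdv_eqI) (simp only: base_pt_upd_avar DERIV_const)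

lemma jpoly_pdv: "f \<in> jpoly \<Longrightarrow> pdv v f \<in> jpoly"
proof (induction rule: jpoly.induct)
  case (jpoly_var w)
  have "pdv v (\<lambda>p. p w) = (\<lambda>p. if v = w then 1 else 0)"
    by (simp add: fun_eq_iff pdv_var)
  then show ?case by (simp add: jpoly.jpoly_const)
next
  case (jpoly_smooth g)
  show ?case
  proof (cases v)
    case (X i)
    then show ?thesis
      using jpoly.jpoly_smooth[OF smooth4_pdx[OF jpoly_smooth]] by (simp add: pdv_smooth_X[OF jpoly_smooth])
  next
    case (A a k J)
    then show ?thesis using jpoly.jpoly_const[of 0] by (simp add: pdv_smooth_avar)
  qed
next
  case (jpoly_add f h)
  then show ?case by (simp add: pdv_add jpoly.jpoly_add)
next
  case (jpoly_mult f h)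
  then show ?case by (simp add: pdv_mult jpoly.jpoly_add jpoly.jpoly_mult)
qed (simp add: pdv_const jpoly.jpoly_const)

lemma jpoly_continuous_on: "f \<in> jpoly \<Longrightarrow> continuous_on UNIV f"
proof (induction rule: jpoly.induct)
  case (jpoly_smooth g)
  have "continuous_on UNIV (\<lambda>p::'g jpt. base_pt p)"
    by (intro continuous_on_vec_lambda continuous_on_product_coordinates)
  from continuous_on_compose2[OF smooth4_continuous_on[OF jpoly_smooth] this]
  show ?case by simp
qed (auto intro: continuous_on_add continuous_on_mult continuous_on_product_coordinates)

lemma jpoly_smooth_jet:
  assumes f: "f \<in> jpoly"
  shows "smooth_jet f"
proof -
  have d: "iterpd ws f \<in> jpoly" for ws
    using f by (induction ws) (auto intro: jpoly_pdv)
  show ?thesis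
    unfolding smooth_jet_def
  proof (intro allI conjI)
    fix ws v p
    show "continuous_on UNIV (iterpd ws f)"
      using d by (rule jpoly_continuous_on)
    show "(\<lambda>t. iterpd ws f (p(v := t))) differentiable at (p v)"
      using jpoly_has_real_derivative[OF d] real_differentiable_def by blast
  qed
qed

definition depends_only_on :: "'g jvar set \<Rightarrow> 'g dfun \<Rightarrow> bool" where
  "depends_only_on S f \<longleftrightarrow> (\<forall>p q. (\<forall>v\<in>S. p v = q v) \<longrightarrow> f p = f q)"

lemma depends_only_on_mono: "depends_only_on S f \<Longrightarrow> S \<subseteq> T \<Longrightarrow> depends_only_on T f"
  unfolding depends_only_on_def by blast

lemma depends_only_on_combine:
  assumes "depends_only_on S f" "depends_only_on T h"
  shows "depends_only_on (S \<union> T) (\<lambda>p. F (f p) (h p))"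
  unfolding depends_only_on_def
proof (intro allI impI)
  fix p q :: "_ jpt"
  assume "\<forall>v\<in>S \<union> T. p v = q v"
  then have "f p = f q" "h p = h q"
    using assms unfolding depends_only_on_def by auto
  then show "F (f p) (h p) = F (f q) (h q)" by simp
qed

lemma jpoly_finite_support: "f \<in> jpoly \<Longrightarrow> \<exists>S. finite S \<and> depends_only_on S f"
proof (induction rule: jpoly.induct)
  case (jpoly_const r)
  show ?case
    by (rule exI[of _ "{}"]) (simp add: depends_only_on_def)
next
  case (jpoly_var v)
  show ?case
    by (rule exI[of _ "{v}"]) (simp add: depends_only_on_def)
next
  case (jpoly_smooth g)
  show ?case
    by (rule exI[of _ "range X"]) (simp add: depends_only_on_def vec_eq_iff)
next
  case (jpoly_add f h)
  then obtain S T where "finite S" "depends_only_on S f" "finite T" "depends_only_on T h"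
    by blast
  then show ?case
    using depends_only_on_combine[of S f T h "(+)"] by blast
next
  case (jpoly_mult f h)
  then obtain S T where "finite S" "depends_only_on S f" "finite T" "depends_only_on T h"
    by blast
  then show ?case
    using depends_only_on_combine[of S f T h "(*)"] by blast
qed

lemma jpoly_common_support:
  assumes "f \<in> jpoly" "h \<in> jpoly"
  obtains S where "finite S" "depends_only_on S f" "depends_only_on S h"
proof -
  obtain S T where "finite S" "depends_only_on S f" "finite T" "depends_only_on T h"
    using assms jpoly_finite_support by blast
  then have "finite (S \<union> T)" "depends_only_on (S \<union> T) f" "depends_only_on (S \<union> T) h"
    using depends_only_on_mono[of S f] depends_only_on_mono[of T h] by auto
  then show ?thesis by (rule that)
qed

lemma pdv_eq_0_outside:
  assumes "depends_only_on S f" "v \<notin> S"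
  shows "pdv v f p = 0"
proof -
  have "(\<lambda>t. f (p(v := t))) = (\<lambda>t. f p)"
    using assms unfolding depends_only_on_def by (intro ext) (metis fun_upd_other)
  then show ?thesis unfolding pdv_def by simp
qed

lemma totD_finite_sum:
  assumes "finite S" "depends_only_on S f"
  shows "totD i f p = pdv (X i) f p + (\<Sum>v\<in>{v\<in>S. is_avar v}. p (shiftv i v) * pdv v f p)"
proof -
  have "{v. is_avar v \<and> pdv v f p \<noteq> 0} \<subseteq> {v\<in>S. is_avar v}"
    using pdv_eq_0_outside[OF assms(2)] by blast
  then have "(\<Sum>v\<in>{v. is_avar v \<and> pdv v f p \<noteq> 0}. p (shiftv i v) * pdv v f p)
      = (\<Sum>v\<in>{v\<in>S. is_avar v}. p (shiftv i v) * pdv v f p)"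
    by (intro sum.mono_neutral_left) (use assms(1) in auto)
  then show ?thesis unfolding totD_def by simp
qed

lemma totD_add:
  assumes "f \<in> jpoly" "h \<in> jpoly"
  shows "totD i (\<lambda>p. f p + h p) p = totD i f p + totD i h p"
proof -
  obtain S where S: "finite S" "depends_only_on S f" "depends_only_on S h"
    using jpoly_common_support[OF assms] .
  have "depends_only_on S (\<lambda>p. f p + h p)"
    using depends_only_on_combine[OF S(2,3)] by simp
  then show ?thesis
    using S assms by (simp add: totD_finite_sum pdv_add distrib_left sum.distrib)
qed

lemma totD_mult:
  assumes "f \<in> jpoly" "h \<in> jpoly"
  shows "totD i (\<lambda>p. f p * h p) p = totD i f p * h p + f p * totD i h p"
proof -
  obtain S where S: "finite S" "depends_only_on S f" "depends_only_on S h"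
    using jpoly_common_support[OF assms] .
  have "depends_only_on S (\<lambda>p. f p * h p)"
    using depends_only_on_combine[OF S(2,3)] by simp
  then show ?thesis
    using S assms
    by (simp add: totD_finite_sum pdv_mult algebra_simps sum.distrib sum_distrib_left sum_distrib_right)
qed

lemma totD_const: "totD i (\<lambda>p. r) = (\<lambda>p. 0)"
  using totD_finite_sum[of "{}" "\<lambda>p. r"] by (auto simp: depends_only_on_def pdv_const)

lemma totD_X: "totD i (\<lambda>q. q (X l)) p = (if i = l then 1 else 0)"
proof -
  have d: "depends_only_on {X l} (\<lambda>q. q (X l))" and e: "{v \<in> {X l}. is_avar v} = {}"
    by (auto simp: depends_only_on_def)
  show ?thesis
    unfolding totD_finite_sum[OF finite.emptyI[THEN finite.insertI] d] e by (simp add: pdv_var)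
qed

lemma totD_A: "totD i (\<lambda>q. q (A a k J)) p = p (A a k (J + {#i#}))"
proof -
  have d: "depends_only_on {A a k J} (\<lambda>q. q (A a k J))" and e: "{v \<in> {A a k J}. is_avar v} = {A a k J}"
    by (auto simp: depends_only_on_def)
  show ?thesis
    unfolding totD_finite_sum[OF finite.emptyI[THEN finite.insertI] d] e by (simp add: pdv_var)
qed

lemma totD_smooth: "smooth4 g \<Longrightarrow> totD i (\<lambda>p. g (base_pt p)) p = pdx i g (base_pt p)"
proof -
  assume g: "smooth4 g"
  have d: "depends_only_on (range X) (\<lambda>p::'g jpt. g (base_pt p))"
    unfolding depends_only_on_def by (simp add: vec_eq_iff)
  have e: "{v \<in> range X. is_avar v} = {}" by auto
  show ?thesis
    unfolding totD_finite_sum[OF finite_imageI[OF finite_class.finite_UNIV] d] e using g by (simp add: pdv_smooth_X)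
qed

lemma totD_sum:
  "(\<And>s. s \<in> T \<Longrightarrow> f s \<in> jpoly) \<Longrightarrow> totD i (\<lambda>p. \<Sum>s\<in>T. f s p) p = (\<Sum>s\<in>T. totD i (f s) p)"
proof (induction T rule: infinite_finite_induct)
  case (insert x F)
  then show ?case by (simp add: totD_add jpoly_sum)
qed (simp_all add: totD_const)

lemma totD_cmult: "f \<in> jpoly \<Longrightarrow> totD i (\<lambda>p. r * f p) p = r * totD i f p"
  using totD_mult[OF jpoly_const, of f i r p] by (simp add: totD_const)

lemma totD_diff: "f \<in> jpoly \<Longrightarrow> h \<in> jpoly \<Longrightarrow> totD i (\<lambda>p. f p - h p) p = totD i f p - totD i h p"
  using totD_add[OF _ jpoly_cmult, of f h i "-1" p] totD_cmult[of h i "-1" p] by simp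

lemma jpoly_totD: "f \<in> jpoly \<Longrightarrow> totD i f \<in> jpoly"
proof -
  assume f: "f \<in> jpoly"
  then obtain S where S: "finite S" "depends_only_on S f"
    using jpoly_finite_support by blast
  have "totD i f = (\<lambda>p. pdv (X i) f p + (\<Sum>v\<in>{v\<in>S. is_avar v}. p (shiftv i v) * pdv v f p))"
    using totD_finite_sum[OF S] by (simp add: fun_eq_iff)
  also have "\<dots> \<in> jpoly"
    using f by (intro jpoly_add jpoly_sum jpoly_mult jpoly_var jpoly_pdv)
  finally show ?thesis .
qed

lemma totD_commute: "f \<in> jpoly \<Longrightarrow> totD i (totD j f) p = totD j (totD i f) p"
proof (induction arbitrary: i j p rule: jpoly.induct)
  case (jpoly_var v)
  show ?case
  proof (cases v)
    case (X l)
    then show ?thesis by (simp add: totD_X totD_const)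
  next
    case (A a k J)
    then show ?thesis by (simp add: totD_A add.commute add.left_commute)
  qed
next
  case (jpoly_smooth g)
  then show ?case
    by (simp add: totD_smooth smooth4_pdx pdx_commute)
next
  case (jpoly_add f h)
  have "totD j (\<lambda>p. f p + h p) = (\<lambda>p. totD j f p + totD j h p)" for j
    using jpoly_add.hyps by (simp add: fun_eq_iff totD_add)
  then show ?case
    using jpoly_add by (simp add: totD_add jpoly_totD)
next
  case (jpoly_mult f h)
  have "totD j (\<lambda>p. f p * h p) = (\<lambda>p. totD j f p * h p + f p * totD j h p)" for j
    using jpoly_mult.hyps by (simp add: fun_eq_iff totD_mult)
  then have D2: "totD i (totD j (\<lambda>p. f p * h p)) p = totD i (totD j f) p * h p + totD j f p * totD i h p
      + (totD i f p * totD j h p + f p * totD i (totD j h) p)" for i j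
    using jpoly_mult.hyps by (simp add: totD_add totD_mult jpoly_totD jpoly.jpoly_mult)
  show ?case
    unfolding D2 by (simp add: jpoly_mult.IH algebra_simps)
qed (simp add: totD_const)

section \<open>The Lie bracket in coordinates\<close>

definition bracket :: "('g::finite \<Rightarrow> 'g \<Rightarrow> 'g \<Rightarrow> real) \<Rightarrow> ('g \<Rightarrow> real) \<Rightarrow> ('g \<Rightarrow> real) \<Rightarrow> 'g \<Rightarrow> real" where
  "bracket c u v a = (\<Sum>b\<in>UNIV. \<Sum>d\<in>UNIV. c a b d * u b * v d)"

lemma sum_rotate3:
  "(\<Sum>x\<in>R. \<Sum>y\<in>S. \<Sum>z\<in>T. f x y z) = (\<Sum>y\<in>S. \<Sum>z\<in>T. \<Sum>x\<in>R. f x y z)"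
proof -
  have "(\<Sum>x\<in>R. \<Sum>y\<in>S. \<Sum>z\<in>T. f x y z) = (\<Sum>y\<in>S. \<Sum>x\<in>R. \<Sum>z\<in>T. f x y z)"
    by (rule sum.swap)
  also have "\<dots> = (\<Sum>y\<in>S. \<Sum>z\<in>T. \<Sum>x\<in>R. f x y z)"
    by (rule sum.cong[OF refl], rule sum.swap)
  finally show ?thesis .
qed

lemma bracket_add_left: "bracket c (\<lambda>b. u b + u' b) v a = bracket c u v a + bracket c u' v a"
  by (simp add: bracket_def algebra_simps sum.distrib)

lemma bracket_add_right: "bracket c u (\<lambda>b. v b + v' b) a = bracket c u v a + bracket c u v' a"
  by (simp add: bracket_def algebra_simps sum.distrib)

lemma bracket_diff_left: "bracket c (\<lambda>b. u b - u' b) v a = bracket c u v a - bracket c u' v a"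
  by (simp add: bracket_def algebra_simps sum_subtractf)

lemma bracket_diff_right: "bracket c u (\<lambda>b. v b - v' b) a = bracket c u v a - bracket c u v' a"
  by (simp add: bracket_def algebra_simps sum_subtractf)

lemma bracket_scale_right: "bracket c u (\<lambda>b. r * v b) a = r * bracket c u v a"
  by (simp add: bracket_def algebra_simps sum_distrib_left)

lemma bracket_neg_right: "bracket c u (\<lambda>b. - v b) a = - bracket c u v a"
  by (simp add: bracket_def sum_negf)

lemma bracket_zero_right: "bracket c u (\<lambda>b. 0) a = 0"
  by (simp add: bracket_def)

lemma bracket_sum_right: "bracket c u (\<lambda>d. \<Sum>s\<in>T. w s d) a = (\<Sum>s\<in>T. bracket c u (w s) a)"
  unfolding bracket_def sum_distrib_left by (rule sum_rotate3[symmetric])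

lemma lie_structure_antisym: "lie_structure c \<Longrightarrow> c a b d = - c a d b"
  unfolding lie_structure_def by blast

lemma lie_structure_jacobi:
  "lie_structure c \<Longrightarrow> (\<Sum>f\<in>UNIV. c a b f * c f d e + c a d f * c f e b + c a e f * c f b d) = 0"
  unfolding lie_structure_def by blast

lemma bracket_antisym:
  assumes "lie_structure c"
  shows "bracket c u v a = - bracket c v u a"
proof -
  have swap: "bracket c v u a = (\<Sum>b\<in>UNIV. \<Sum>d\<in>UNIV. c a d b * v d * u b)"
    unfolding bracket_def by (rule sum.swap)
  have "c a b d * u b * v d + c a d b * v d * u b = 0" for b d
    using lie_structure_antisym[OF assms, of a b d] by (simp add: algebra_simps)
  then have "bracket c u v a + bracket c v u a = 0"
    unfolding swap by (simp add: bracket_def sum.distrib[symmetric])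
  then show ?thesis by simp
qed

lemma bracket_bracket:
  "bracket c u (bracket c v w) a
     = (\<Sum>b\<in>UNIV. \<Sum>e\<in>UNIV. \<Sum>f\<in>UNIV. u b * v e * w f * (\<Sum>d\<in>UNIV. c a b d * c d e f))"
proof -
  have "bracket c u (bracket c v w) a
      = (\<Sum>b\<in>UNIV. \<Sum>d\<in>UNIV. \<Sum>e\<in>UNIV. \<Sum>f\<in>UNIV. u b * v e * w f * (c a b d * c d e f))"
    by (simp add: bracket_def sum_distrib_left algebra_simps)
  also have "\<dots> = (\<Sum>b\<in>UNIV. \<Sum>e\<in>UNIV. \<Sum>f\<in>UNIV. \<Sum>d\<in>UNIV. u b * v e * w f * (c a b d * c d e f))"
    by (rule sum.cong[OF refl], rule sum_rotate3)
  finally show ?thesis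
    by (simp add: sum_distrib_left)
qed

lemma bracket_jacobi:
  assumes "lie_structure c"
  shows "bracket c u (bracket c v w) a + bracket c v (bracket c w u) a + bracket c w (bracket c u v) a = 0"
proof -
  define J where "J b e f = (\<Sum>d\<in>UNIV. c a b d * c d e f)" for b e f
  have t1: "bracket c u (bracket c v w) a = (\<Sum>b\<in>UNIV. \<Sum>e\<in>UNIV. \<Sum>f\<in>UNIV. u b * v e * w f * J b e f)"
    unfolding J_def by (rule bracket_bracket)
  have "bracket c v (bracket c w u) a = (\<Sum>e\<in>UNIV. \<Sum>f\<in>UNIV. \<Sum>b\<in>UNIV. v e * w f * u b * J e f b)"
    unfolding J_def by (rule bracket_bracket)
  also have "\<dots> = (\<Sum>e\<in>UNIV. \<Sum>f\<in>UNIV. \<Sum>b\<in>UNIV. u b * v e * w f * J e f b)"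
    by (simp add: mult_ac)
  also have "\<dots> = (\<Sum>b\<in>UNIV. \<Sum>e\<in>UNIV. \<Sum>f\<in>UNIV. u b * v e * w f * J e f b)"
    by (rule sum_rotate3[symmetric])
  finally have t2: "bracket c v (bracket c w u) a = \<dots>" .
  have "bracket c w (bracket c u v) a = (\<Sum>f\<in>UNIV. \<Sum>b\<in>UNIV. \<Sum>e\<in>UNIV. w f * u b * v e * J f b e)"
    unfolding J_def by (rule bracket_bracket)
  also have "\<dots> = (\<Sum>f\<in>UNIV. \<Sum>b\<in>UNIV. \<Sum>e\<in>UNIV. u b * v e * w f * J f b e)"
    by (simp add: mult_ac)
  also have "\<dots> = (\<Sum>b\<in>UNIV. \<Sum>e\<in>UNIV. \<Sum>f\<in>UNIV. u b * v e * w f * J f b e)"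
    by (rule sum_rotate3)
  finally have t3: "bracket c w (bracket c u v) a = \<dots>" .
  have jacobi: "J b e f + J e f b + J f b e = 0" for b e f
    using lie_structure_jacobi[OF assms, of a b e f] unfolding J_def by (simp add: sum.distrib)
  have "u b * v e * w f * J b e f + u b * v e * w f * J e f b + u b * v e * w f * J f b e = 0" for b e f
    using jacobi[of b e f] by (metis distrib_left mult_zero_right)
  then show ?thesis
    unfolding t1 t2 t3 by (simp only: sum.distrib[symmetric] sum.neutral_const)
qed

definition mat_act :: "('g::finite \<Rightarrow> 'g \<Rightarrow> real) \<Rightarrow> ('g \<Rightarrow> real) \<Rightarrow> 'g \<Rightarrow> real" where
  "mat_act M u a = (\<Sum>b\<in>UNIV. M a b * u b)"

text \<open>\<open>M\<close> commutes with every \<open>ad u\<close>, i.e. lies in the centroid of the Lie algebra.\<close>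

definition ad_equivariant :: "('g::finite \<Rightarrow> 'g \<Rightarrow> 'g \<Rightarrow> real) \<Rightarrow> ('g \<Rightarrow> 'g \<Rightarrow> real) \<Rightarrow> bool" where
  "ad_equivariant c M \<longleftrightarrow> (\<forall>a g d. (\<Sum>b\<in>UNIV. M a b * c b g d) + (\<Sum>b\<in>UNIV. c a b g * M b d) = 0)"

lemma mat_act_bracket:
  assumes L: "lie_structure c" and M: "ad_equivariant c M"
  shows "mat_act M (bracket c u v) a = bracket c u (mat_act M v) a"
proof -
  have M': "(\<Sum>b\<in>UNIV. M a b * c b g d) = (\<Sum>b\<in>UNIV. c a g b * M b d)" for g d
  proof -
    have "(\<Sum>b\<in>UNIV. M a b * c b g d) = - (\<Sum>b\<in>UNIV. c a b g * M b d)"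
      using M unfolding ad_equivariant_def by (simp add: eq_neg_iff_add_eq_0)
    also have "\<dots> = (\<Sum>b\<in>UNIV. - (c a b g * M b d))"
      by (simp add: sum_negf)
    also have "\<dots> = (\<Sum>b\<in>UNIV. c a g b * M b d)"
      by (rule sum.cong[OF refl]) (simp add: lie_structure_antisym[OF L, of a _ g])
    finally show ?thesis .
  qed
  have "mat_act M (bracket c u v) a = (\<Sum>b\<in>UNIV. \<Sum>g\<in>UNIV. \<Sum>d\<in>UNIV. u g * v d * (M a b * c b g d))"
    by (simp add: mat_act_def bracket_def sum_distrib_left mult_ac)
  also have "\<dots> = (\<Sum>g\<in>UNIV. \<Sum>d\<in>UNIV. \<Sum>b\<in>UNIV. u g * v d * (M a b * c b g d))"
    by (rule sum_rotate3)
  also have "\<dots> = (\<Sum>g\<in>UNIV. \<Sum>d\<in>UNIV. u g * v d * (\<Sum>b\<in>UNIV. c a g b * M b d))"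
    by (simp add: sum_distrib_left[symmetric] M')
  also have "\<dots> = (\<Sum>g\<in>UNIV. \<Sum>d\<in>UNIV. \<Sum>b\<in>UNIV. u g * v d * (c a g b * M b d))"
    by (simp add: sum_distrib_left)
  also have "\<dots> = (\<Sum>g\<in>UNIV. \<Sum>b\<in>UNIV. \<Sum>d\<in>UNIV. u g * v d * (c a g b * M b d))"
    by (rule sum.cong[OF refl], rule sum.swap)
  also have "\<dots> = bracket c u (mat_act M v) a"
    by (simp add: mat_act_def bracket_def sum_distrib_left mult_ac)
  finally show ?thesis .
qed

section \<open>Covariant derivatives and curvature\<close>

lemma jpoly_bracket:
  "(\<And>b. U b \<in> jpoly) \<Longrightarrow> (\<And>d. V d \<in> jpoly) \<Longrightarrow> (\<lambda>p. bracket c (\<lambda>b. U b p) (\<lambda>d. V d p) a) \<in> jpoly"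
  unfolding bracket_def by (intro jpoly_sum jpoly_mult jpoly_const)

lemma totD_bracket:
  assumes U: "\<And>b. U b \<in> jpoly" and V: "\<And>d. V d \<in> jpoly"
  shows "totD i (\<lambda>p. bracket c (\<lambda>b. U b p) (\<lambda>d. V d p) a) p
     = bracket c (\<lambda>b. totD i (U b) p) (\<lambda>d. V d p) a + bracket c (\<lambda>b. U b p) (\<lambda>d. totD i (V d) p) a"
proof -
  have "totD i (\<lambda>p. bracket c (\<lambda>b. U b p) (\<lambda>d. V d p) a) p
      = (\<Sum>b\<in>UNIV. \<Sum>d\<in>UNIV. totD i (\<lambda>p. c a b d * U b p * V d p) p)"
    unfolding bracket_def using U V by (simp add: totD_sum jpoly_sum jpoly_cmult jpoly_mult)
  also have "\<dots> = (\<Sum>b\<in>UNIV. \<Sum>d\<in>UNIV. c a b d * totD i (U b) p * V d p + c a b d * U b p * totD i (V d) p)"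
    using jpoly_cmult[OF U] U V by (simp add: totD_mult totD_cmult)
  finally show ?thesis
    by (simp add: bracket_def sum.distrib)
qed

lemma Fld_eq: "Fld c a i j = (\<lambda>p. p (A a j {#i#}) - p (A a i {#j#})
    + bracket c (\<lambda>b. p (A b i {#})) (\<lambda>d. p (A d j {#})) a)"
  by (simp add: fun_eq_iff Fld_def bracket_def)

lemma Fld_antisym: "lie_structure c \<Longrightarrow> Fld c a i j p = - Fld c a j i p"
  unfolding Fld_eq using bracket_antisym[of c "\<lambda>b. p (A b i {#})"] by simp

lemma jpoly_Fld: "Fld c a i j \<in> jpoly"
  unfolding Fld_eq by (intro jpoly_add jpoly_diff jpoly_bracket jpoly_var)

lemma totD_Fld: "totD k (Fld c a i j) p = p (A a j ({#i#} + {#k#})) - p (A a i ({#j#} + {#k#}))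
   + bracket c (\<lambda>b. p (A b i {#k#})) (\<lambda>d. p (A d j {#})) a + bracket c (\<lambda>b. p (A b i {#})) (\<lambda>d. p (A d j {#k#})) a"
  unfolding Fld_eq
  by (simp add: totD_add totD_diff totD_bracket totD_A jpoly_diff jpoly_bracket jpoly.jpoly_var)

lemma cov_bracket: "cov c i G a p = totD i (G a) p + bracket c (\<lambda>b. p (A b i {#})) (\<lambda>d. G d p) a"
  by (simp add: cov_def bracket_def)

lemma cov_eq: "cov c i G a = (\<lambda>p. totD i (G a) p + bracket c (\<lambda>b. p (A b i {#})) (\<lambda>d. G d p) a)"
  by (simp add: fun_eq_iff cov_bracket)

lemma jpoly_cov: "(\<And>b. G b \<in> jpoly) \<Longrightarrow> cov c i G a \<in> jpoly"
  unfolding cov_eq by (intro jpoly_add jpoly_totD jpoly_bracket jpoly_var)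

lemma cov_add: "(\<And>b. G b \<in> jpoly) \<Longrightarrow> (\<And>b. H b \<in> jpoly) \<Longrightarrow>
   cov c i (\<lambda>a p. G a p + H a p) a p = cov c i G a p + cov c i H a p"
  by (simp add: cov_bracket totD_add bracket_add_right)

lemma cov_scale: "(\<And>b. G b \<in> jpoly) \<Longrightarrow> cov c i (\<lambda>a p. r * G a p) a p = r * cov c i G a p"
  by (simp add: cov_bracket totD_cmult bracket_scale_right algebra_simps)

lemma cov_neg: "(\<And>b. G b \<in> jpoly) \<Longrightarrow> cov c i (\<lambda>a p. - G a p) a p = - cov c i G a p"
  using cov_scale[of G c i "-1"] by simp

lemma cov_zero: "cov c i (\<lambda>a p. 0) a p = 0"
  by (simp add: cov_bracket totD_const bracket_zero_right)

lemma cov_sum: "(\<And>s b. s \<in> T \<Longrightarrow> G s b \<in> jpoly) \<Longrightarrow>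
   cov c i (\<lambda>a p. \<Sum>s\<in>T. G s a p) a p = (\<Sum>s\<in>T. cov c i (G s) a p)"
  by (simp add: cov_bracket totD_sum bracket_sum_right sum.distrib)

lemma ricci_identity:
  assumes L: "lie_structure c" and G: "\<And>b. G b \<in> jpoly"
  shows "cov c i (cov c j G) a p - cov c j (cov c i G) a p = bracket c (\<lambda>b. Fld c b i j p) (\<lambda>d. G d p) a"
proof -
  define ai where "ai = (\<lambda>b. p (A b i {#}))"
  define aj where "aj = (\<lambda>b. p (A b j {#}))"
  define g where "g = (\<lambda>d. G d p)"
  have expand: "cov c i (cov c j G) a p = totD i (totD j (G a)) p
     + bracket c (\<lambda>b. p (A b j {#i#})) (\<lambda>d. G d p) a + bracket c (\<lambda>b. p (A b j {#})) (\<lambda>d. totD i (G d) p) a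
     + bracket c (\<lambda>b. p (A b i {#})) (\<lambda>d. totD j (G d) p) a
     + bracket c (\<lambda>b. p (A b i {#})) (bracket c (\<lambda>b. p (A b j {#})) (\<lambda>d. G d p)) a" for i j
    unfolding cov_eq using G
    by (simp add: totD_add totD_bracket totD_A jpoly_totD jpoly_bracket jpoly.jpoly_var bracket_add_right)
  have Fld: "bracket c (\<lambda>b. Fld c b i j p) g a = bracket c (\<lambda>b. p (A b j {#i#})) g a
      - bracket c (\<lambda>b. p (A b i {#j#})) g a + bracket c (bracket c ai aj) g a"
    unfolding Fld_eq ai_def aj_def by (simp add: bracket_add_left bracket_diff_left)
  have jacobi: "bracket c g (bracket c ai aj) a + bracket c ai (bracket c aj g) a + bracket c aj (bracket c g ai) a = 0"
    by (rule bracket_jacobi[OF L])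
  have "bracket c g ai = (\<lambda>b. - bracket c ai g b)"
    using bracket_antisym[OF L] by blast
  then have "bracket c aj (bracket c g ai) a = - bracket c aj (bracket c ai g) a"
    by (simp add: bracket_neg_right)
  moreover have "bracket c (bracket c ai aj) g a = - bracket c g (bracket c ai aj) a"
    by (rule bracket_antisym[OF L])
  moreover have "totD i (totD j (G a)) p = totD j (totD i (G a)) p"
    using G by (rule totD_commute)
  ultimately show ?thesis
    using Fld jacobi unfolding expand ai_def aj_def g_def by linarith
qed

lemma bianchi_identity:
  assumes L: "lie_structure c"
  shows "cov c i (\<lambda>b. Fld c b j k) a p + cov c j (\<lambda>b. Fld c b k i) a p + cov c k (\<lambda>b. Fld c b i j) a p = 0"
proof -
  define ai where "ai = (\<lambda>b. p (A b i {#}))"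
  define aj where "aj = (\<lambda>b. p (A b j {#}))"
  define ak where "ak = (\<lambda>b. p (A b k {#}))"
  have expand: "cov c m (\<lambda>b. Fld c b n q) a p = p (A a q ({#n#} + {#m#})) - p (A a n ({#q#} + {#m#}))
     + bracket c (\<lambda>b. p (A b n {#m#})) (\<lambda>d. p (A d q {#})) a
     + bracket c (\<lambda>b. p (A b n {#})) (\<lambda>d. p (A d q {#m#})) a
     + (bracket c (\<lambda>b. p (A b m {#})) (\<lambda>b. p (A b q {#n#})) a
        - bracket c (\<lambda>b. p (A b m {#})) (\<lambda>b. p (A b n {#q#})) a
        + bracket c (\<lambda>b. p (A b m {#})) (bracket c (\<lambda>b. p (A b n {#})) (\<lambda>d. p (A d q {#}))) a)" for m n q
    unfolding cov_bracket totD_Fld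
    by (simp add: Fld_eq bracket_add_right bracket_diff_right)
  have "bracket c ai (bracket c aj ak) a + bracket c aj (bracket c ak ai) a + bracket c ak (bracket c ai aj) a = 0"
    by (rule bracket_jacobi[OF L])
  moreover have "bracket c (\<lambda>b. p (A b n {#m#})) (\<lambda>d. p (A d q {#})) a
      = - bracket c (\<lambda>b. p (A b q {#})) (\<lambda>d. p (A d n {#m#})) a" for n m q
    by (rule bracket_antisym[OF L])
  ultimately show ?thesis
    unfolding expand ai_def aj_def ak_def by (simp add: add.commute)
qed

lemma cov_Fld_antisym:
  assumes "lie_structure c"
  shows "cov c m (\<lambda>b. Fld c b j l) b p = - cov c m (\<lambda>b. Fld c b l j) b p"
proof -
  have "(\<lambda>b. Fld c b j l) = (\<lambda>b p. - Fld c b l j p)"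
    using Fld_antisym[OF assms] by blast
  then show ?thesis
    using cov_neg[of "\<lambda>b. Fld c b l j"] by (simp add: jpoly_Fld)
qed

lemma cov_cov_Fld_antisym:
  assumes "lie_structure c"
  shows "cov c m (cov c k (\<lambda>b. Fld c b j l)) b p = - cov c m (cov c k (\<lambda>b. Fld c b l j)) b p"
proof -
  have "cov c k (\<lambda>b. Fld c b j l) = (\<lambda>b p. - cov c k (\<lambda>b. Fld c b l j) b p)"
    using cov_Fld_antisym[OF assms] by blast
  then show ?thesis
    using cov_neg[of "cov c k (\<lambda>b. Fld c b l j)"] by (simp add: jpoly_cov jpoly_Fld)
qed

lemma cov_bianchi_identity:
  assumes L: "lie_structure c"
  shows "cov c m (cov c i (\<lambda>b. Fld c b j k)) a p + cov c m (cov c j (\<lambda>b. Fld c b k i)) a p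
       + cov c m (cov c k (\<lambda>b. Fld c b i j)) a p = 0"
proof -
  have "(\<lambda>a p. cov c i (\<lambda>b. Fld c b j k) a p + cov c j (\<lambda>b. Fld c b k i) a p + cov c k (\<lambda>b. Fld c b i j) a p)
      = (\<lambda>a p. 0)"
    using bianchi_identity[OF L] by blast
  then have "cov c m (\<lambda>a p. cov c i (\<lambda>b. Fld c b j k) a p + cov c j (\<lambda>b. Fld c b k i) a p
      + cov c k (\<lambda>b. Fld c b i j) a p) a p = 0"
    by (simp add: cov_zero)
  then show ?thesis
    by (simp add: cov_add jpoly_add jpoly_cov jpoly_Fld)
qed

lemma onR_YM:
  assumes "onR c n p"
  shows "(\<Sum>j\<in>UNIV. eta j j * cov c j (\<lambda>b. Fld c b i j) a p) = 0"
  using assms[unfolded onR_def, rule_format, of "[]"] by (simp add: YM_def)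

lemma onR_cov_YM:
  assumes "onR c n p" "n \<ge> 1"
  shows "(\<Sum>j\<in>UNIV. eta j j * cov c k (cov c j (\<lambda>b. Fld c b i j)) a p) = 0"
proof -
  have "cov c k (YM c i) a p = 0"
    using assms(1)[unfolded onR_def, rule_format, of "[k]"] assms(2) by simp
  moreover have "YM c i = (\<lambda>a p. \<Sum>j\<in>UNIV. eta j j * cov c j (\<lambda>b. Fld c b i j) a p)"
    by (simp add: fun_eq_iff YM_def)
  ultimately show ?thesis
    by (simp add: cov_sum cov_scale jpoly_cmult jpoly_cov jpoly_Fld)
qed

text \<open>Bianchi identity, then Ricci identity, then the derivative of the field equation.\<close>

lemma YM_cov_cov_Fld:
  assumes L: "lie_structure c" and R: "onR c 1 p"
  shows "(\<Sum>j\<in>UNIV. eta j j * (cov c j (cov c i (\<lambda>b. Fld c b j l)) a p - cov c j (cov c j (\<lambda>b. Fld c b i l)) a p))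
       = (\<Sum>j\<in>UNIV. eta j j * bracket c (\<lambda>b. Fld c b j l p) (\<lambda>b. Fld c b j i p) a)"
proof -
  have "cov c j (cov c i (\<lambda>b. Fld c b j l)) a p - cov c j (cov c j (\<lambda>b. Fld c b i l)) a p
      = cov c l (cov c j (\<lambda>b. Fld c b j i)) a p + bracket c (\<lambda>b. Fld c b j l p) (\<lambda>b. Fld c b j i p) a" for j
  proof -
    have "cov c j (cov c j (\<lambda>b. Fld c b i l)) a p + cov c j (cov c i (\<lambda>b. Fld c b l j)) a p
        + cov c j (cov c l (\<lambda>b. Fld c b j i)) a p = 0"
      by (rule cov_bianchi_identity[OF L])
    moreover have "cov c j (cov c i (\<lambda>b. Fld c b l j)) a p = - cov c j (cov c i (\<lambda>b. Fld c b j l)) a p"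
      by (rule cov_cov_Fld_antisym[OF L])
    moreover have "cov c j (cov c l (\<lambda>b. Fld c b j i)) a p - cov c l (cov c j (\<lambda>b. Fld c b j i)) a p
        = bracket c (\<lambda>b. Fld c b j l p) (\<lambda>b. Fld c b j i p) a"
      by (rule ricci_identity[OF L jpoly_Fld])
    ultimately show ?thesis by linarith
  qed
  moreover have "(\<Sum>j\<in>UNIV. eta j j * cov c l (cov c j (\<lambda>b. Fld c b j i)) a p) = 0"
  proof -
    have "cov c l (cov c j (\<lambda>b. Fld c b j i)) a p = - cov c l (cov c j (\<lambda>b. Fld c b i j)) a p" for j
      by (rule cov_cov_Fld_antisym[OF L])
    then have "(\<Sum>j\<in>UNIV. eta j j * cov c l (cov c j (\<lambda>b. Fld c b j i)) a p)
        = - (\<Sum>j\<in>UNIV. eta j j * cov c l (cov c j (\<lambda>b. Fld c b i j)) a p)"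
      by (simp add: sum_negf)
    then show ?thesis
      using onR_cov_YM[OF R] by simp
  qed
  ultimately show ?thesis
    by (simp add: distrib_left sum.distrib)
qed

definition matfield_act :: "('g::finite \<Rightarrow> 'g \<Rightarrow> real^4 \<Rightarrow> real) \<Rightarrow> ('g \<Rightarrow> 'g dfun) \<Rightarrow> 'g \<Rightarrow> 'g dfun" where
  "matfield_act M G a p = (\<Sum>b\<in>UNIV. M a b (base_pt p) * G b p)"

lemma jpoly_matfield_act:
  "(\<And>a b. smooth4 (M a b)) \<Longrightarrow> (\<And>b. G b \<in> jpoly) \<Longrightarrow> matfield_act M G a \<in> jpoly"
  unfolding matfield_act_def[abs_def] by (intro jpoly_sum jpoly_mult jpoly_smooth)

lemma ad_equivariant_pdx:
  assumes sm: "\<And>a b. smooth4 (M a b)" and eq: "\<And>x. ad_equivariant c (\<lambda>a b. M a b x)"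
  shows "ad_equivariant c (\<lambda>a b. pdx i (M a b) x)"
  unfolding ad_equivariant_def
proof (intro allI)
  fix a g d
  have "(\<lambda>x. (\<Sum>b\<in>UNIV. M a b x * c b g d) + (\<Sum>b\<in>UNIV. c a b g * M b d x)) = (\<lambda>x. 0)"
    using eq unfolding ad_equivariant_def by blast
  then have "pdx i (\<lambda>x. (\<Sum>b\<in>UNIV. M a b x * c b g d) + (\<Sum>b\<in>UNIV. c a b g * M b d x)) x = 0"
    by (simp add: pdx_const)
  then show "(\<Sum>b\<in>UNIV. pdx i (M a b) x * c b g d) + (\<Sum>b\<in>UNIV. c a b g * pdx i (M b d) x) = 0"
    using sm smooth4_differentiable
    by (simp add: pdx_add pdx_sum pdx_cmult mult.commute[of _ "c _ _ _"] differentiable_sum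
        differentiable_mult differentiable_add)
qed

lemma cov_matfield_act:
  assumes L: "lie_structure c" and sm: "\<And>a b. smooth4 (M a b)"
    and eq: "\<And>x. ad_equivariant c (\<lambda>a b. M a b x)" and G: "\<And>b. G b \<in> jpoly"
  shows "cov c i (matfield_act M G) a p
     = matfield_act (\<lambda>a b. pdx i (M a b)) G a p + matfield_act M (cov c i G) a p"
proof -
  have "totD i (matfield_act M G a) p
      = (\<Sum>b\<in>UNIV. pdx i (M a b) (base_pt p) * G b p + M a b (base_pt p) * totD i (G b) p)"
    unfolding matfield_act_def[abs_def] using sm G
    by (simp add: totD_sum totD_mult totD_smooth jpoly_mult jpoly_smooth)
  moreover have "bracket c (\<lambda>b. p (A b i {#})) (\<lambda>d. matfield_act M G d p) a
      = (\<Sum>b\<in>UNIV. M a b (base_pt p) * bracket c (\<lambda>b. p (A b i {#})) (\<lambda>d. G d p) b)"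
    using mat_act_bracket[OF L eq[of "base_pt p"], of "\<lambda>b. p (A b i {#})" "\<lambda>d. G d p" a]
    by (simp add: mat_act_def[abs_def] matfield_act_def)
  ultimately show ?thesis
    by (simp add: cov_bracket matfield_act_def sum.distrib distrib_left)
qed

lemma cov_cov_matfield_act:
  assumes L: "lie_structure c" and sm: "\<And>a b. smooth4 (M a b)"
    and eq: "\<And>x. ad_equivariant c (\<lambda>a b. M a b x)" and G: "\<And>b. G b \<in> jpoly"
  shows "cov c m (cov c k (matfield_act M G)) a p
     = matfield_act (\<lambda>a b. pdx m (pdx k (M a b))) G a p + matfield_act (\<lambda>a b. pdx k (M a b)) (cov c m G) a p
       + matfield_act (\<lambda>a b. pdx m (M a b)) (cov c k G) a p + matfield_act M (cov c m (cov c k G)) a p"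
proof -
  have sm': "smooth4 (pdx k (M a b))" for a b
    using sm by (rule smooth4_pdx)
  have eq': "ad_equivariant c (\<lambda>a b. pdx k (M a b) x)" for x
    using sm eq by (rule ad_equivariant_pdx)
  have "cov c k (matfield_act M G) = (\<lambda>a p. matfield_act (\<lambda>a b. pdx k (M a b)) G a p + matfield_act M (cov c k G) a p)"
    by (intro ext) (rule cov_matfield_act[OF L sm eq G])
  then show ?thesis
    using cov_matfield_act[OF L sm' eq' G] cov_matfield_act[OF L sm eq jpoly_cov[OF G]]
    by (simp add: cov_add jpoly_matfield_act sm sm' G jpoly_cov)
qed

section \<open>Conformal Killing vector fields\<close>

lemma sum_UNIV_4: "sum f (UNIV::4 set) = f 0 + f 1 + f 2 + f 3"
proof -
  have "(4::4) = 0" by simp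
  then show ?thesis using sum_4[of f] by (simp only:) (simp add: ac_simps)
qed

lemma eta_square: "eta k k * eta k k = 1"
  by (simp add: eta_def)

lemma sum_eta: "(\<Sum>l\<in>UNIV. eta j l * f l) = eta j j * f j"
proof -
  have "(\<Sum>l\<in>UNIV. eta j l * f l) = (\<Sum>l\<in>UNIV. if j = l then eta j j * f j else 0)"
    by (rule sum.cong) (simp_all add: eta_def)
  then show ?thesis by simp
qed

definition conformal_killing :: "(4 \<Rightarrow> real^4 \<Rightarrow> real) \<Rightarrow> (real^4 \<Rightarrow> real) \<Rightarrow> bool" where
  "conformal_killing v \<kappa> \<longleftrightarrow>
     (\<forall>i j x. (1/2) * (eta i i * pdx i (v j) x + eta j j * pdx j (v i) x) = eta i j * \<kappa> x)"

lemma conformal_killing_factor: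
  assumes "conformal_killing v \<kappa>"
  shows "\<kappa> = pdx 0 (v 0)"
proof
  fix x
  have "(1/2) * (eta 0 0 * pdx 0 (v 0) x + eta 0 0 * pdx 0 (v 0) x) = eta 0 0 * \<kappa> x"
    using assms unfolding conformal_killing_def by blast
  then show "\<kappa> x = pdx 0 (v 0) x"
    by (simp add: eta_def)
qed

lemma conformal_killing_pdx:
  assumes sm: "\<And>l. smooth4 (v l)" and ck: "conformal_killing v \<kappa>"
  shows "eta i i * pdx m (pdx i (v j)) x + eta j j * pdx m (pdx j (v i)) x = 2 * eta i j * pdx m \<kappa> x"
proof -
  have d: "pdx n (v l) differentiable at y" for n l y
    using sm smooth4_pdx smooth4_differentiable by blast
  let ?s = "\<lambda>x. eta i i * pdx i (v j) x + eta j j * pdx j (v i) x"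
  have "(\<lambda>x. (1/2) * ?s x) = (\<lambda>x. eta i j * \<kappa> x)"
    using ck unfolding conformal_killing_def by blast
  moreover have "?s differentiable at x"
    using d by (intro differentiable_add differentiable_mult differentiable_const)
  moreover have "\<kappa> differentiable at x"
    using conformal_killing_factor[OF ck] d by simp
  ultimately have "(1/2) * pdx m ?s x = eta i j * pdx m \<kappa> x"
    using pdx_cmult[of ?s x m "1/2"] pdx_cmult[of \<kappa> x m "eta i j"] by simp
  moreover have "pdx m ?s x = eta i i * pdx m (pdx i (v j)) x + eta j j * pdx m (pdx j (v i)) x"
    using d by (simp add: pdx_add pdx_cmult)
  ultimately show ?thesis
    by simp
qed

lemma conformal_killing_pdx_pdx:
  assumes sm: "\<And>l. smooth4 (v l)" and ck: "conformal_killing v \<kappa>"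
  shows "pdx m (pdx k (v l)) x
     = eta l l * (eta k l * pdx m \<kappa> x + eta m l * pdx k \<kappa> x - eta m k * pdx l \<kappa> x)"
proof -
  define V where "V m k l = pdx m (pdx k (v l)) x" for m k l
  define L where "L m = pdx m \<kappa> x" for m
  have V_sym: "V m k l = V k m l" for m k l
    unfolding V_def using sm by (rule pdx_commute)
  \<comment> \<open>the weights may be exchanged: for \<open>k \<noteq> l\<close> multiply by \<open>eta k k * eta l l\<close>\<close>
  have Y: "eta l l * V m k l + eta k k * V m l k = 2 * eta k l * L m" for m k l
    using conformal_killing_pdx[OF sm ck, of k m l x] unfolding V_def L_def
    by (cases "k = 0"; cases "l = 0"; cases "k = l") (simp_all add: eta_def)
  have k2: "eta l l * V m k l + eta m m * V l k m = 2 * eta m l * L k"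
    using Y[where m=k and k=m and l=l] V_sym[of k m l] V_sym[of k l m] by simp
  have k3: "eta k k * V m l k + eta m m * V l k m = 2 * eta m k * L l"
    using Y[where m=l and k=m and l=k] V_sym[of l m k] by simp
  from Y[where m=m and k=k and l=l] k2 k3 have "eta l l * V m k l = eta k l * L m + eta m l * L k - eta m k * L l"
    by linarith
  then have "eta l l * (eta l l * V m k l) = eta l l * (eta k l * L m + eta m l * L k - eta m k * L l)"
    by simp
  then show ?thesis
    unfolding V_def L_def by (simp add: mult.assoc[symmetric] eta_square)
qed

lemma conformal_killing_contract_pdx_pdx:
  assumes sm: "\<And>l. smooth4 (v l)" and ck: "conformal_killing v \<kappa>"
    and anti: "\<And>j l. F j l = - F l j"
  shows "(\<Sum>j\<in>UNIV. eta j j * (\<Sum>l\<in>UNIV. pdx j (pdx i (v l)) x * F j l - pdx j (pdx j (v l)) x * F i l)) = 0"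
proof -
  have F: "F 1 0 = - F 0 1" "F 2 0 = - F 0 2" "F 3 0 = - F 0 3" "F 2 1 = - F 1 2" "F 3 1 = - F 1 3"
    "F 3 2 = - F 2 3"
    by (rule anti)+
  have F_diag: "F j j = 0" for j
    using anti[of j j] by simp
  have "i = 0 \<or> i = 1 \<or> i = 2 \<or> i = 3"
    using exhaust_4[of i] by auto
  then show ?thesis
    unfolding conformal_killing_pdx_pdx[OF sm ck]
    by (elim disjE) (simp_all add: sum_UNIV_4 eta_def F F_diag algebra_simps)
qed

lemma killing_contract_bianchi:
  fixes W :: "4 \<Rightarrow> 4 \<Rightarrow> real" and D :: "4 \<Rightarrow> 4 \<Rightarrow> 4 \<Rightarrow> real"
  assumes killing: "\<And>j l. W j l + W l j = 2 * eta j l * \<kappa>"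
    and anti: "\<And>m j l. D m j l = - D m l j"
    and bianchi: "\<And>i j k. D i j k + D j k i + D k i j = 0"
    and trace: "\<And>i. (\<Sum>j\<in>UNIV. eta j j * D j i j) = 0"
  shows "(\<Sum>j\<in>UNIV. \<Sum>l\<in>UNIV. W j l * D i j l) = 2 * (\<Sum>j\<in>UNIV. \<Sum>l\<in>UNIV. W j l * D j i l)"
proof -
  define U where "U = (\<Sum>j\<in>UNIV. \<Sum>l\<in>UNIV. W j l * D i j l)"
  define T where "T = (\<Sum>j\<in>UNIV. \<Sum>l\<in>UNIV. W j l * D l i j)"
  have "W j l * D j i l = W j l * D i j l + W j l * D l i j" for j l
    using bianchi[of j i l] anti[of i l j] anti[of l j i] by (simp add: distrib_left[symmetric])
  then have S: "(\<Sum>j\<in>UNIV. \<Sum>l\<in>UNIV. W j l * D j i l) = U + T"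
    unfolding U_def T_def by (simp only: sum.distrib[symmetric])
  have "W j l * D l i j = eta j l * (2 * \<kappa> * D l i j) - W l j * D l i j" for j l
  proof -
    have "W j l * D l i j + W l j * D l i j = (W j l + W l j) * D l i j"
      by (rule distrib_right[symmetric])
    then show ?thesis
      by (simp add: killing eq_diff_eq mult_ac)
  qed
  then have "T = (\<Sum>j\<in>UNIV. \<Sum>l\<in>UNIV. eta j l * (2 * \<kappa> * D l i j) - W l j * D l i j)"
    unfolding T_def by (intro sum.cong refl)
  also have "\<dots> = (\<Sum>j\<in>UNIV. \<Sum>l\<in>UNIV. eta j l * (2 * \<kappa> * D l i j)) - (\<Sum>j\<in>UNIV. \<Sum>l\<in>UNIV. W l j * D l i j)"
    by (simp only: sum_subtractf)
  also have "(\<Sum>j\<in>UNIV. \<Sum>l\<in>UNIV. eta j l * (2 * \<kappa> * D l i j)) = 2 * \<kappa> * (\<Sum>j\<in>UNIV. eta j j * D j i j)"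
    by (simp only: sum_eta) (simp add: sum_distrib_left mult_ac)
  also have "(\<Sum>j\<in>UNIV. \<Sum>l\<in>UNIV. W l j * D l i j) = (\<Sum>j\<in>UNIV. \<Sum>l\<in>UNIV. W j l * D j i l)"
    by (rule sum.swap)
  finally have "T = - (U + T)"
    using trace S by simp
  then show ?thesis
    unfolding U_def[symmetric] S by simp
qed

lemma conformal_killing_contract_pdx:
  fixes D :: "4 \<Rightarrow> 4 \<Rightarrow> 4 \<Rightarrow> real"
  assumes ck: "conformal_killing v \<kappa>"
    and anti: "\<And>m j l. D m j l = - D m l j"
    and bianchi: "\<And>i j k. D i j k + D j k i + D k i j = 0"
    and trace: "\<And>i. (\<Sum>j\<in>UNIV. eta j j * D j i j) = 0"
  shows "(\<Sum>j\<in>UNIV. eta j j * (\<Sum>l\<in>UNIV. pdx i (v l) x * D j j l + pdx j (v l) x * D i j l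
           - 2 * (pdx j (v l) x * D j i l))) = 0"
proof -
  define W where "W j l = eta j j * pdx j (v l) x" for j l
  have "D j j l = - D j l j" for j l
    by (rule anti)
  then have "(\<Sum>j\<in>UNIV. eta j j * D j j l) = - (\<Sum>j\<in>UNIV. eta j j * D j l j)" for l
    by (simp add: sum_negf)
  then have trace': "(\<Sum>j\<in>UNIV. \<Sum>l\<in>UNIV. pdx i (v l) x * (eta j j * D j j l)) = 0"
    using trace by (subst sum.swap) (simp add: sum_distrib_left[symmetric])
  have "W j l + W l j = 2 * eta j l * \<kappa> x" for j l
  proof -
    have "(1/2) * (W j l + W l j) = eta j l * \<kappa> x"
      using ck unfolding conformal_killing_def W_def by blast
    then show ?thesis by simp
  qed
  then have W: "(\<Sum>j\<in>UNIV. \<Sum>l\<in>UNIV. W j l * D i j l) = 2 * (\<Sum>j\<in>UNIV. \<Sum>l\<in>UNIV. W j l * D j i l)"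
    using anti bianchi trace by (rule killing_contract_bianchi)
  have "eta j j * (\<Sum>l\<in>UNIV. pdx i (v l) x * D j j l + pdx j (v l) x * D i j l - 2 * (pdx j (v l) x * D j i l))
      = (\<Sum>l\<in>UNIV. pdx i (v l) x * (eta j j * D j j l)) + (\<Sum>l\<in>UNIV. W j l * D i j l)
        - 2 * (\<Sum>l\<in>UNIV. W j l * D j i l)" for j
    unfolding W_def by (simp add: sum.distrib sum_subtractf sum_distrib_left algebra_simps)
  then show ?thesis
    using trace' W by (simp add: sum.distrib sum_subtractf sum_distrib_left)
qed

section \<open>The linearized Yang-Mills operator\<close>

definition lin_YM :: "('g::finite \<Rightarrow> 'g \<Rightarrow> 'g \<Rightarrow> real) \<Rightarrow> (4 \<Rightarrow> 'g \<Rightarrow> 'g dfun) \<Rightarrow> 4 \<Rightarrow> 'g \<Rightarrow> 'g dfun" where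
  "lin_YM c Q i a p =
     (\<Sum>j\<in>UNIV. eta j j * (cov c j (cov c i (Q j)) a p - cov c j (cov c j (Q i)) a p))
     - (\<Sum>j\<in>UNIV. \<Sum>b\<in>UNIV. \<Sum>d\<in>UNIV. c a b d * (eta j j * Fld c b i j p) * Q j d p)"

lemma gen_symmetry_iff:
  "gen_symmetry c n Q \<longleftrightarrow> (\<forall>i a. diff_fun n (Q i a)) \<and> (\<forall>p. onR c n p \<longrightarrow> (\<forall>i a. lin_YM c Q i a p = 0))"
  by (simp add: gen_symmetry_def lin_YM_def)

lemma cov_cov_sum:
  "(\<And>s b. s \<in> T \<Longrightarrow> G s b \<in> jpoly) \<Longrightarrow>
   cov c m (cov c k (\<lambda>a p. \<Sum>s\<in>T. G s a p)) a p = (\<Sum>s\<in>T. cov c m (cov c k (G s)) a p)"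
proof -
  assume G: "\<And>s b. s \<in> T \<Longrightarrow> G s b \<in> jpoly"
  have "cov c k (\<lambda>a p. \<Sum>s\<in>T. G s a p) = (\<lambda>a p. \<Sum>s\<in>T. cov c k (G s) a p)"
    using G by (intro ext) (rule cov_sum)
  then show ?thesis
    using G by (simp add: cov_sum jpoly_cov)
qed

lemma lin_YM_sum:
  assumes "\<And>s i b. s \<in> T \<Longrightarrow> Q s i b \<in> jpoly"
  shows "lin_YM c (\<lambda>i a p. \<Sum>s\<in>T. Q s i a p) i a p = (\<Sum>s\<in>T. lin_YM c (Q s) i a p)"
proof -
  have "(\<Sum>j\<in>UNIV. \<Sum>b\<in>UNIV. \<Sum>d\<in>UNIV. c a b d * (eta j j * Fld c b i j p) * (\<Sum>s\<in>T. Q s j d p))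
      = (\<Sum>s\<in>T. \<Sum>j\<in>UNIV. \<Sum>b\<in>UNIV. \<Sum>d\<in>UNIV. c a b d * (eta j j * Fld c b i j p) * Q s j d p)"
    by (simp add: sum_distrib_left sum.swap[of _ T])
  moreover have "(\<Sum>j\<in>UNIV. eta j j * ((\<Sum>s\<in>T. cov c j (cov c i (Q s j)) a p) - (\<Sum>s\<in>T. cov c j (cov c j (Q s i)) a p)))
      = (\<Sum>s\<in>T. \<Sum>j\<in>UNIV. eta j j * (cov c j (cov c i (Q s j)) a p - cov c j (cov c j (Q s i)) a p))"
    by (simp add: sum_subtractf[symmetric] sum_distrib_left sum.swap[of _ UNIV T])
  ultimately show ?thesis
    using assms by (simp add: lin_YM_def cov_cov_sum sum_subtractf)
qed

lemma bracket_Fld_matfield_act_Fld: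
  assumes L: "lie_structure c" and eq: "\<And>x. ad_equivariant c (\<lambda>a b. M a b x)"
  shows "bracket c (\<lambda>b. Fld c b i j p) (\<lambda>d. matfield_act M (\<lambda>b. Fld c b j l) d p) a
       = (\<Sum>b\<in>UNIV. M a b (base_pt p) * bracket c (\<lambda>b. Fld c b j l p) (\<lambda>b. Fld c b j i p) b)"
proof -
  let ?M = "\<lambda>a b. M a b (base_pt p)"
  have "(\<lambda>b. Fld c b i j p) = (\<lambda>b. - Fld c b j i p)"
    using Fld_antisym[OF L] by blast
  then have "bracket c (\<lambda>b. Fld c b i j p) (\<lambda>b. Fld c b j l p) b
      = bracket c (\<lambda>b. Fld c b j l p) (\<lambda>b. Fld c b j i p) b" for b
    using bracket_antisym[OF L, of "\<lambda>b. Fld c b i j p" "\<lambda>b. Fld c b j l p" b]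
    by (simp add: bracket_neg_right)
  moreover have "bracket c (\<lambda>b. Fld c b i j p) (mat_act ?M (\<lambda>b. Fld c b j l p)) a
      = mat_act ?M (bracket c (\<lambda>b. Fld c b i j p) (\<lambda>b. Fld c b j l p)) a"
    by (rule mat_act_bracket[OF L eq[of "base_pt p"], symmetric])
  ultimately show ?thesis
    by (simp add: mat_act_def[abs_def] matfield_act_def)
qed

lemma lin_YM_matfield_act_Fld:
  assumes L: "lie_structure c" and sm: "\<And>a b. smooth4 (M a b)"
    and eq: "\<And>x. ad_equivariant c (\<lambda>a b. M a b x)" and R: "onR c 1 p"
  shows "lin_YM c (\<lambda>i. matfield_act M (\<lambda>b. Fld c b i l)) i a p
    = (\<Sum>b\<in>UNIV. \<Sum>j\<in>UNIV. eta j j *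
        ((pdx j (pdx i (M a b)) (base_pt p) * Fld c b j l p - pdx j (pdx j (M a b)) (base_pt p) * Fld c b i l p)
         + (pdx i (M a b) (base_pt p) * cov c j (\<lambda>b. Fld c b j l) b p
            + pdx j (M a b) (base_pt p) * cov c i (\<lambda>b. Fld c b j l) b p
            - 2 * (pdx j (M a b) (base_pt p) * cov c j (\<lambda>b. Fld c b i l) b p))))"
    (is "_ = (\<Sum>b\<in>UNIV. \<Sum>j\<in>UNIV. eta j j * ?T j b)")
proof -
  define x where "x = base_pt p"
  define Z where "Z j b = cov c j (cov c i (\<lambda>b. Fld c b j l)) b p - cov c j (cov c j (\<lambda>b. Fld c b i l)) b p" for j b
  define B where "B j = bracket c (\<lambda>b. Fld c b j l p) (\<lambda>b. Fld c b j i p)" for j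
  have cov2: "cov c j (cov c i (matfield_act M (\<lambda>b. Fld c b j l))) a p
      - cov c j (cov c j (matfield_act M (\<lambda>b. Fld c b i l))) a p
      = (\<Sum>b\<in>UNIV. ?T j b) + (\<Sum>b\<in>UNIV. M a b x * Z j b)" for j
    unfolding cov_cov_matfield_act[OF L sm eq jpoly_Fld] Z_def x_def
    by (simp add: matfield_act_def sum.distrib sum_subtractf sum_distrib_left algebra_simps)
  have brk: "(\<Sum>b\<in>UNIV. \<Sum>d\<in>UNIV. c a b d * (eta j j * Fld c b i j p) * matfield_act M (\<lambda>b. Fld c b j l) d p)
      = eta j j * (\<Sum>b\<in>UNIV. M a b x * B j b)" for j
  proof -
    have "(\<Sum>b\<in>UNIV. \<Sum>d\<in>UNIV. c a b d * (eta j j * Fld c b i j p) * matfield_act M (\<lambda>b. Fld c b j l) d p)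
        = eta j j * bracket c (\<lambda>b. Fld c b i j p) (\<lambda>d. matfield_act M (\<lambda>b. Fld c b j l) d p) a"
      by (simp add: bracket_def sum_distrib_left mult_ac)
    then show ?thesis
      unfolding bracket_Fld_matfield_act_Fld[OF L eq] B_def x_def .
  qed
  have swap: "(\<Sum>j\<in>UNIV. eta j j * (\<Sum>b\<in>UNIV. M a b x * W j b)) = (\<Sum>b\<in>UNIV. M a b x * (\<Sum>j\<in>UNIV. eta j j * W j b))" for W
    unfolding sum_distrib_left by (subst sum.swap) (simp add: mult_ac)
  have "(\<Sum>j\<in>UNIV. eta j j * Z j b) = (\<Sum>j\<in>UNIV. eta j j * B j b)" for b
    unfolding Z_def B_def by (rule YM_cov_cov_Fld[OF L R])
  then have zeroth: "(\<Sum>j\<in>UNIV. eta j j * (\<Sum>b\<in>UNIV. M a b x * Z j b)) = (\<Sum>j\<in>UNIV. eta j j * (\<Sum>b\<in>UNIV. M a b x * B j b))"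
    unfolding swap by simp
  have "lin_YM c (\<lambda>i. matfield_act M (\<lambda>b. Fld c b i l)) i a p
      = (\<Sum>j\<in>UNIV. eta j j * ((\<Sum>b\<in>UNIV. ?T j b) + (\<Sum>b\<in>UNIV. M a b x * Z j b)))
        - (\<Sum>j\<in>UNIV. eta j j * (\<Sum>b\<in>UNIV. M a b x * B j b))"
    unfolding lin_YM_def cov2 brk ..
  also have "\<dots> = (\<Sum>j\<in>UNIV. eta j j * (\<Sum>b\<in>UNIV. ?T j b))"
    using zeroth by (simp add: distrib_left sum.distrib)
  also have "\<dots> = (\<Sum>b\<in>UNIV. \<Sum>j\<in>UNIV. eta j j * ?T j b)"
    unfolding sum_distrib_left by (rule sum.swap)
  finally show ?thesis .
qed

definition xi_Fld :: "('g::finite \<Rightarrow> 'g \<Rightarrow> 'g \<Rightarrow> real) \<Rightarrow> ('g \<Rightarrow> 'g \<Rightarrow> 4 \<Rightarrow> real^4 \<Rightarrow> real) \<Rightarrow> 4 \<Rightarrow> 'g \<Rightarrow> 'g dfun" where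
  "xi_Fld c xi i a p = (\<Sum>b\<in>UNIV. \<Sum>j\<in>UNIV. xi a b j (base_pt p) * Fld c b i j p)"

lemma xi_Fld_eq_sum: "xi_Fld c xi = (\<lambda>i a p. \<Sum>l\<in>UNIV. matfield_act (\<lambda>a b. xi a b l) (\<lambda>b. Fld c b i l) a p)"
  unfolding xi_Fld_def[abs_def] matfield_act_def by (intro ext) (rule sum.swap)

lemma finite_vord_le: "finite {v :: 'g::finite jvar. vord v \<le> n}"
proof -
  have "{v :: 'g jvar. vord v \<le> n}
      \<subseteq> range X \<union> (\<lambda>(b, j, J). A b j J) ` (UNIV \<times> UNIV \<times> (\<Union>m\<le>n. multisets_of_size UNIV m))"
  proof
    fix v :: "'g jvar"
    assume "v \<in> {v. vord v \<le> n}"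
    then show "v \<in> range X \<union> (\<lambda>(b, j, J). A b j J) ` (UNIV \<times> UNIV \<times> (\<Union>m\<le>n. multisets_of_size UNIV m))"
      by (cases v) (force simp: multisets_of_size_def)+
  qed
  then show ?thesis
    by (rule finite_subset) (auto intro!: finite_imageI finite_cartesian_product finite_multisets_of_size)
qed

lemma diff_fun_xi_Fld:
  assumes "\<And>a b j. smooth4 (xi a b j)"
  shows "diff_fun 1 (xi_Fld c xi i a)"
proof -
  have "xi_Fld c xi i a \<in> jpoly"
    unfolding xi_Fld_def[abs_def] using assms by (intro jpoly_sum jpoly_mult jpoly_smooth jpoly_Fld)
  moreover have "xi_Fld c xi i a p = xi_Fld c xi i a q" if "\<forall>v\<in>{v. vord v \<le> 1}. p v = q v" for p q
  proof -
    have "base_pt p = base_pt q" "Fld c b i j p = Fld c b i j q" for b j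
      using that by (simp_all add: vec_eq_iff Fld_def)
    then show ?thesis by (simp add: xi_Fld_def)
  qed
  ultimately show ?thesis
    unfolding diff_fun_def using finite_vord_le jpoly_smooth_jet by blast
qed

lemma lin_YM_xi_Fld:
  assumes L: "lie_structure c" and sm: "\<And>a b j. smooth4 (xi a b j)"
    and ck: "\<And>a b. conformal_killing (xi a b) (k a b)"
    and eq: "\<And>j x. ad_equivariant c (\<lambda>a b. xi a b j x)" and R: "onR c 1 p"
  shows "lin_YM c (xi_Fld c xi) i a p = 0"
proof -
  let ?x = "base_pt p"
  let ?F = "\<lambda>b j l. Fld c b j l p" and ?D = "\<lambda>b m j l. cov c m (\<lambda>b. Fld c b j l) b p"
  let ?T2 = "\<lambda>b l j. pdx j (pdx i (xi a b l)) ?x * ?F b j l - pdx j (pdx j (xi a b l)) ?x * ?F b i l"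
  let ?T1 = "\<lambda>b l j. pdx i (xi a b l) ?x * ?D b j j l + pdx j (xi a b l) ?x * ?D b i j l
      - 2 * (pdx j (xi a b l) ?x * ?D b j i l)"
  have "lin_YM c (xi_Fld c xi) i a p
      = (\<Sum>l\<in>UNIV. lin_YM c (\<lambda>i. matfield_act (\<lambda>a b. xi a b l) (\<lambda>b. Fld c b i l)) i a p)"
    unfolding xi_Fld_eq_sum using sm by (intro lin_YM_sum jpoly_matfield_act jpoly_Fld)
  also have "\<dots> = (\<Sum>l\<in>UNIV. \<Sum>b\<in>UNIV. \<Sum>j\<in>UNIV. eta j j * (?T2 b l j + ?T1 b l j))"
    by (intro sum.cong refl lin_YM_matfield_act_Fld[of c "\<lambda>a b. xi a b _", OF L sm eq R])
  also have "\<dots> = (\<Sum>b\<in>UNIV. \<Sum>j\<in>UNIV. \<Sum>l\<in>UNIV. eta j j * (?T2 b l j + ?T1 b l j))"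
    by (rule sum_rotate3)
  also have "\<dots> = (\<Sum>b\<in>UNIV. (\<Sum>j\<in>UNIV. eta j j * (\<Sum>l\<in>UNIV. ?T2 b l j))
      + (\<Sum>j\<in>UNIV. eta j j * (\<Sum>l\<in>UNIV. ?T1 b l j)))"
    by (simp only: sum_distrib_left distrib_left sum.distrib)
  also have "\<dots> = 0"
  proof (intro sum.neutral ballI)
    fix b
    have "(\<Sum>j\<in>UNIV. eta j j * (\<Sum>l\<in>UNIV. ?T2 b l j)) = 0"
      using sm ck Fld_antisym[OF L] by (intro conformal_killing_contract_pdx_pdx)
    moreover have "(\<Sum>j\<in>UNIV. eta j j * (\<Sum>l\<in>UNIV. ?T1 b l j)) = 0"
      using ck cov_Fld_antisym[OF L] bianchi_identity[OF L] onR_YM[OF R]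
      by (intro conformal_killing_contract_pdx)
    ultimately show "(\<Sum>j\<in>UNIV. eta j j * (\<Sum>l\<in>UNIV. ?T2 b l j)) + (\<Sum>j\<in>UNIV. eta j j * (\<Sum>l\<in>UNIV. ?T1 b l j)) = 0"
      by simp
  qed
  finally show ?thesis .
qed

theorem proposition2p3:
  fixes c :: "'g::finite \<Rightarrow> 'g \<Rightarrow> 'g \<Rightarrow> real"
    and xi :: "'g \<Rightarrow> 'g \<Rightarrow> 4 \<Rightarrow> real^4 \<Rightarrow> real"
    and k :: "'g \<Rightarrow> 'g \<Rightarrow> real^4 \<Rightarrow> real"
  assumes "lie_structure c"
    and "\<forall>a b j. smooth4 (xi a b j)"
    and "\<forall>a b i j x. (1/2) * (eta i i * pdx i (xi a b j) x + eta j j * pdx j (xi a b i) x)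
                       = eta i j * k a b x"
    and "\<forall>a g d j x. (\<Sum>b\<in>UNIV. xi a b j x * c b g d) + (\<Sum>b\<in>UNIV. c a b g * xi b d j x) = 0"
  shows "gen_symmetry c 1 (\<lambda>i a p. \<Sum>b\<in>UNIV. \<Sum>j\<in>UNIV. xi a b j (\<chi> l. p (X l)) * Fld c b i j p)"
proof -
  have sm: "\<And>a b j. smooth4 (xi a b j)"
    using assms(2) by blast
  have ck: "\<And>a b. conformal_killing (xi a b) (k a b)"
    using assms(3) unfolding conformal_killing_def by blast
  have eq: "\<And>j x. ad_equivariant c (\<lambda>a b. xi a b j x)"
    using assms(4) unfolding ad_equivariant_def by blast
  have "diff_fun 1 (xi_Fld c xi i a)" for i a
    using sm by (rule diff_fun_xi_Fld)
  moreover have "lin_YM c (xi_Fld c xi) i a p = 0" if "onR c 1 p" for i a p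
    using assms(1) sm ck eq that by (rule lin_YM_xi_Fld)
  ultimately have "gen_symmetry c 1 (xi_Fld c xi)"
    unfolding gen_symmetry_iff by blast
  then show ?thesis
    by (simp add: xi_Fld_def[abs_def])
qed

end
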